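(* There are absolute constants $c_1,c_2>0$ such that the following holds. Let $\mathcal U$ be a finite set, $\epsilon<1/400$, $\Pi$ an orthogonal projector on $\mathbb{R}^{\mathcal U}$, and $f:\mathcal U\to\{0,1\}$ with $\Pr_{u\in\mathcal U}[f(u)=1]=\mu>0$ and $\|\Pi f\|_2^2\ge(1-\epsilon)\mu$. Then there is a function $\bar f:\mathcal U\to\mathbb{R}$ such that $\|\Pi\bar f\|_4^4\ge c_1\mu$ and $(\Pi f)(u)^2\ge c_2|\bar f(u)|$ for every $u\in\mathcal U$.
   Context: Norms and inner products on $\mathbb{R}^{\mathcal U}$ use the uniform (expectation) measure: $\langle g,h\rangle=\mathbb{E}_{u}g(u)h(u)$, $\|g\|_p=(\mathbb{E}_u|g(u)|^p)^{1/p}$; orthogonality of $\Pi$ refers to this inner product. *)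

theory Defs
  imports "HOL-Analysis.Analysis"
begin

text \<open>Functions on a finite set U are represented as total functions; only values on U matter.
  All averages use the uniform (expectation) measure on U.\<close>

definition expect :: "'a set \<Rightarrow> ('a \<Rightarrow> real) \<Rightarrow> real" where
  "expect U g = (\<Sum>u\<in>U. g u) / real (card U)"

definition inner_U :: "'a set \<Rightarrow> ('a \<Rightarrow> real) \<Rightarrow> ('a \<Rightarrow> real) \<Rightarrow> real" where
  "inner_U U g h = expect U (\<lambda>u. g u * h u)"

definition lp_norm :: "'a set \<Rightarrow> real \<Rightarrow> ('a \<Rightarrow> real) \<Rightarrow> real" where
  "lp_norm U p g = (expect U (\<lambda>u. \<bar>g u\<bar> powr p)) powr (1 / p)"

definition orth_projector :: "'a set \<Rightarrow> (('a \<Rightarrow> real) \<Rightarrow> ('a \<Rightarrow> real)) \<Rightarrow> bool" where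
  "orth_projector U P \<longleftrightarrow>
     (\<forall>g h. (\<forall>u\<in>U. g u = h u) \<longrightarrow> (\<forall>u\<in>U. P g u = P h u)) \<and>
     (\<forall>g h a b. \<forall>u\<in>U. P (\<lambda>x. a * g x + b * h x) u = a * P g u + b * P h u) \<and>
     (\<forall>g. \<forall>u\<in>U. P (P g) u = P g u) \<and>
     (\<forall>g h. inner_U U (P g) h = inner_U U g (P h))"

end

theory Submission
  imports Defs
begin

text \<open>Let \<open>h\<close> be the indicator of the points where \<open>f = 1\<close> and \<open>P f \<ge> 1/2\<close>, so that
  \<open>(P f)\<^sup>2 \<ge> h/4\<close> pointwise. By Pythagoras \<open>\<parallel>f - P f\<parallel>\<^sup>2 = \<parallel>f\<parallel>\<^sup>2 - \<parallel>P f\<parallel>\<^sup>2 \<le> \<epsilon>\<mu>\<close>, and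
  \<open>(f - h)\<^sup>2 \<le> 4 (f - P f)\<^sup>2\<close> pointwise; as \<open>P\<close> is a contraction, \<open>P h\<close> is within
  \<open>2 \<surd>(\<epsilon>\<mu>)\<close> of \<open>P f\<close> and \<open>\<parallel>P h\<parallel>\<^sub>2\<^sup>2 \<ge> 2\<mu>/5\<close>. For a 0/1-valued \<open>h\<close> we have \<open>h = h\<^sup>2\<close>, so
  \<open>\<parallel>P h\<parallel>\<^sub>2\<^sup>2 = \<langle>h, P h\<rangle>\<close> and two applications of Cauchy--Schwarz give
  \<open>\<parallel>P h\<parallel>\<^sub>2\<^sup>8 \<le> (\<bbbE> h)\<^sup>3 \<parallel>P h\<parallel>\<^sub>4\<^sup>4\<close>; with \<open>\<bbbE> h \<le> \<mu>\<close> this yields \<open>\<parallel>P h\<parallel>\<^sub>4\<^sup>4 \<ge> (2/5)\<^sup>4 \<mu>\<close>.\<close>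

lemma expect_mono: "(\<And>u. u \<in> U \<Longrightarrow> g u \<le> h u) \<Longrightarrow> expect U g \<le> expect U h"
  unfolding expect_def by (intro divide_right_mono sum_mono) auto

lemma expect_nonneg: "(\<And>u. u \<in> U \<Longrightarrow> 0 \<le> g u) \<Longrightarrow> 0 \<le> expect U g"
  using expect_mono[of U "\<lambda>_. 0" g] by (simp add: expect_def)

lemma expect_cong: "(\<And>u. u \<in> U \<Longrightarrow> g u = h u) \<Longrightarrow> expect U g = expect U h"
  unfolding expect_def by (simp cong: sum.cong)

lemma expect_add: "expect U (\<lambda>u. g u + h u) = expect U g + expect U h"
  unfolding expect_def by (simp add: sum.distrib add_divide_distrib)

lemma expect_diff: "expect U (\<lambda>u. g u - h u) = expect U g - expect U h"
  unfolding expect_def by (simp add: sum_subtractf diff_divide_distrib)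

lemma expect_cmult: "expect U (\<lambda>u. c * g u) = c * expect U g"
  unfolding expect_def by (simp add: sum_distrib_left)

lemma expect_Cauchy_Schwarz:
  "(expect U (\<lambda>u. g u * h u))\<^sup>2 \<le> expect U (\<lambda>u. (g u)\<^sup>2) * expect U (\<lambda>u. (h u)\<^sup>2)"
  unfolding expect_def using Cauchy_Schwarz_ineq_sum[of g h U]
  by (simp add: power_divide divide_right_mono flip: power2_eq_square)

lemma lp_norm_power:
  assumes "n > 0"
  shows "lp_norm U (real n) g ^ n = expect U (\<lambda>u. \<bar>g u\<bar> ^ n)"
proof -
  have "expect U (\<lambda>u. \<bar>g u\<bar> powr real n) = expect U (\<lambda>u. \<bar>g u\<bar> ^ n)"
    using assms by (intro expect_cong) (simp add: powr_realpow')
  moreover have "0 \<le> expect U (\<lambda>u. \<bar>g u\<bar> ^ n)"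
    by (rule expect_nonneg) simp
  ultimately show ?thesis
    using assms by (simp add: lp_norm_def root_powr_inverse[symmetric])
qed

lemma lp_norm_2_power: "lp_norm U 2 g ^ 2 = expect U (\<lambda>u. (g u)\<^sup>2)"
  using lp_norm_power[of 2 U g] by simp

lemma lp_norm_4_power: "lp_norm U 4 g ^ 4 = expect U (\<lambda>u. g u ^ 4)"
  using lp_norm_power[of 4 U g] by (simp add: power_even_abs)

lemma orth_projector_diff:
  assumes "orth_projector U P" and "u \<in> U"
  shows "P (\<lambda>x. g x - h x) u = P g u - P h u"
proof -
  have "P (\<lambda>x. 1 * g x + (-1) * h x) u = 1 * P g u + (-1) * P h u"
    using assms unfolding orth_projector_def by blast
  then show ?thesis by simp
qed

lemma orth_projector_norm_eq_inner:
  assumes "orth_projector U P"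
  shows "expect U (\<lambda>u. (P g u)\<^sup>2) = expect U (\<lambda>u. g u * P g u)"
proof -
  have "expect U (\<lambda>u. (P g u)\<^sup>2) = inner_U U (P g) (P g)"
    by (simp add: inner_U_def power2_eq_square)
  also have "\<dots> = inner_U U g (P (P g))"
    using assms by (simp add: orth_projector_def)
  also have "\<dots> = expect U (\<lambda>u. g u * P g u)"
    using assms unfolding inner_U_def orth_projector_def by (intro expect_cong) simp
  finally show ?thesis .
qed

lemma orth_projector_Pythagoras:
  assumes "orth_projector U P"
  shows "expect U (\<lambda>u. (g u - P g u)\<^sup>2) = expect U (\<lambda>u. (g u)\<^sup>2) - expect U (\<lambda>u. (P g u)\<^sup>2)"
proof -
  have "expect U (\<lambda>u. (g u - P g u)\<^sup>2)
      = expect U (\<lambda>u. (g u)\<^sup>2) - 2 * expect U (\<lambda>u. g u * P g u) + expect U (\<lambda>u. (P g u)\<^sup>2)"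
    by (simp add: power2_diff expect_add expect_diff expect_cmult mult.assoc)
  then show ?thesis
    using orth_projector_norm_eq_inner[OF assms, of g] by simp
qed

lemma orth_projector_contraction:
  assumes "orth_projector U P"
  shows "expect U (\<lambda>u. (P g u)\<^sup>2) \<le> expect U (\<lambda>u. (g u)\<^sup>2)"
  using orth_projector_Pythagoras[OF assms, of g] expect_nonneg[of U "\<lambda>u. (g u - P g u)\<^sup>2"]
  by simp

lemma expect_indicator:
  assumes "finite U" and "\<forall>u\<in>U. f u \<in> {0, 1}"
  shows "expect U f = real (card {u\<in>U. f u = 1}) / real (card U)"
proof -
  have "(\<Sum>u\<in>U. f u) = (\<Sum>u\<in>U. if f u = 1 then 1 else 0)"
    using assms(2) by (intro sum.cong) auto
  also have "\<dots> = real (card {u\<in>U. f u = 1})"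
    using sum.inter_filter[OF assms(1), of "\<lambda>_. 1::real" "\<lambda>u. f u = 1"] by simp
  finally show ?thesis by (simp add: expect_def)
qed

lemma expect_indicator_square:
  "\<forall>u\<in>U. f u \<in> {0, 1} \<Longrightarrow> expect U (\<lambda>u. (f u)\<^sup>2) = expect U f"
  by (intro expect_cong) auto

lemma orth_projector_indicator_fourth_moment:
  assumes P: "orth_projector U P" and f01: "\<forall>u\<in>U. f u \<in> {0, 1}"
  shows "(expect U (\<lambda>u. (P f u)\<^sup>2)) ^ 4 \<le> (expect U f) ^ 3 * expect U (\<lambda>u. P f u ^ 4)"
proof -
  define X where "X = expect U (\<lambda>u. (P f u)\<^sup>2)"
  define Y where "Y = expect U (\<lambda>u. f u * (P f u)\<^sup>2)"
  define Z where "Z = expect U (\<lambda>u. P f u ^ 4)"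
  have sq_f: "u \<in> U \<Longrightarrow> (f u)\<^sup>2 = f u" for u
    using f01 by auto
  have X_eq: "expect U (\<lambda>u. f u * (f u * P f u)) = X"
    unfolding X_def orth_projector_norm_eq_inner[OF P]
    by (intro expect_cong) (simp add: sq_f flip: mult.assoc power2_eq_square)
  note Ef2 = expect_indicator_square[OF f01]
  have Y_eq: "expect U (\<lambda>u. (f u * P f u)\<^sup>2) = Y"
    unfolding Y_def by (intro expect_cong) (simp add: power_mult_distrib sq_f)
  have Z_eq: "expect U (\<lambda>u. ((P f u)\<^sup>2)\<^sup>2) = Z"
    unfolding Z_def by (simp flip: power_mult)
  have X2: "X\<^sup>2 \<le> expect U f * Y"
    using expect_Cauchy_Schwarz[of U f "\<lambda>u. f u * P f u"] unfolding X_eq Ef2 Y_eq .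
  have Y2: "Y\<^sup>2 \<le> expect U f * Z"
    using expect_Cauchy_Schwarz[of U f "\<lambda>u. (P f u)\<^sup>2"] unfolding Ef2 Z_eq
    by (simp add: Y_def)
  have "X ^ 4 = (X\<^sup>2)\<^sup>2" by simp
  also have "\<dots> \<le> (expect U f * Y)\<^sup>2"
    using X2 by (intro power_mono) simp_all
  also have "\<dots> = (expect U f)\<^sup>2 * Y\<^sup>2" by (simp add: power_mult_distrib)
  also have "\<dots> \<le> (expect U f)\<^sup>2 * (expect U f * Z)"
    using Y2 by (intro mult_left_mono) simp_all
  finally show ?thesis
    unfolding X_def[symmetric] Z_def[symmetric] by (simp add: power_numeral_reduce mult.assoc)
qed

definition heavy_part :: "(('a \<Rightarrow> real) \<Rightarrow> ('a \<Rightarrow> real)) \<Rightarrow> ('a \<Rightarrow> real) \<Rightarrow> 'a \<Rightarrow> real" where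
  "heavy_part P f = (\<lambda>u. if f u = 1 \<and> 1/2 \<le> P f u then 1 else 0)"

lemma heavy_part_bounded_by_projection: "\<bar>heavy_part P f u\<bar> \<le> 4 * (P f u)\<^sup>2"
proof (cases "f u = 1 \<and> 1/2 \<le> P f u")
  case True
  then have "(1/2)\<^sup>2 \<le> (P f u)\<^sup>2" by (intro power_mono) auto
  with True show ?thesis by (simp add: heavy_part_def power2_eq_square)
qed (auto simp: heavy_part_def)

lemma heavy_part_projection_mass:
  assumes P: "orth_projector U P" and f01: "\<forall>u\<in>U. f u \<in> {0, 1}"
    and mass: "(1 - \<epsilon>) * expect U f \<le> expect U (\<lambda>u. (P f u)\<^sup>2)" and eps: "\<epsilon> < 1/400"
  shows "2/5 * expect U f \<le> expect U (\<lambda>u. (P (heavy_part P f) u)\<^sup>2)"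
proof -
  define d where "d = (\<lambda>u. f u - heavy_part P f u)"
  have Ef: "0 \<le> expect U f"
    using f01 by (intro expect_nonneg) auto
  have "expect U (\<lambda>u. (f u - P f u)\<^sup>2) = expect U f - expect U (\<lambda>u. (P f u)\<^sup>2)"
    using orth_projector_Pythagoras[OF P, of f] expect_indicator_square[OF f01] by simp
  also have "\<dots> \<le> \<epsilon> * expect U f"
    using mass by (simp add: algebra_simps)
  finally have dist: "expect U (\<lambda>u. (f u - P f u)\<^sup>2) \<le> \<epsilon> * expect U f" .
  have d_pt: "(d u)\<^sup>2 \<le> 4 * (f u - P f u)\<^sup>2" if "u \<in> U" for u
  proof (cases "f u = 1 \<and> P f u < 1/2")
    case True
    then have "(1/2)\<^sup>2 \<le> (f u - P f u)\<^sup>2" by (intro power_mono) auto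
    with True show ?thesis by (simp add: d_def heavy_part_def power2_eq_square)
  next
    case False
    with f01 that show ?thesis by (auto simp: d_def heavy_part_def)
  qed
  have "expect U (\<lambda>u. (P d u)\<^sup>2) \<le> expect U (\<lambda>u. (d u)\<^sup>2)"
    using orth_projector_contraction[OF P] .
  also have "\<dots> \<le> expect U (\<lambda>u. 4 * (f u - P f u)\<^sup>2)"
    using d_pt by (rule expect_mono)
  also have "\<dots> = 4 * expect U (\<lambda>u. (f u - P f u)\<^sup>2)"
    by (rule expect_cmult)
  finally have Pd: "expect U (\<lambda>u. (P d u)\<^sup>2) \<le> 4 * (\<epsilon> * expect U f)"
    using dist by linarith
  have heavy_pt: "1/2 * (P f u)\<^sup>2 - (P d u)\<^sup>2 \<le> (P (heavy_part P f) u)\<^sup>2" if "u \<in> U" for u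
  proof -
    have "heavy_part P f = (\<lambda>x. f x - d x)" by (simp add: d_def)
    then have "P (heavy_part P f) u = P f u - P d u"
      using orth_projector_diff[OF P that] by simp
    moreover have "1/2 * a\<^sup>2 - b\<^sup>2 \<le> (a - b)\<^sup>2" for a b :: real
      using zero_le_power2[of "a - 2 * b"] by (simp add: power2_eq_square algebra_simps)
    ultimately show ?thesis by simp
  qed
  have "1/2 * expect U (\<lambda>u. (P f u)\<^sup>2) - expect U (\<lambda>u. (P d u)\<^sup>2)
      \<le> expect U (\<lambda>u. (P (heavy_part P f) u)\<^sup>2)"
    using expect_mono[of U "\<lambda>u. 1/2 * (P f u)\<^sup>2 - (P d u)\<^sup>2", OF heavy_pt]
    unfolding expect_diff expect_cmult .
  moreover have "\<epsilon> * expect U f \<le> 1/400 * expect U f"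
    using eps Ef by (intro mult_right_mono) auto
  moreover have "(1 - \<epsilon>) * expect U f = expect U f - \<epsilon> * expect U f"
    by (simp add: algebra_simps)
  ultimately show ?thesis
    using mass Pd Ef by linarith
qed

lemma heavy_part_fourth_moment:
  assumes P: "orth_projector U P" and f01: "\<forall>u\<in>U. f u \<in> {0, 1}"
    and "(1 - \<epsilon>) * expect U f \<le> expect U (\<lambda>u. (P f u)\<^sup>2)" and "\<epsilon> < 1/400"
  shows "16/625 * expect U f \<le> expect U (\<lambda>u. P (heavy_part P f) u ^ 4)"
proof (cases "expect U f = 0")
  case False
  define \<mu> where "\<mu> = expect U f"
  define Z where "Z = expect U (\<lambda>u. P (heavy_part P f) u ^ 4)"
  have h01: "\<forall>u\<in>U. heavy_part P f u \<in> {0, 1}"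
    by (simp add: heavy_part_def)
  have \<mu>: "0 < \<mu>"
    using False f01 expect_nonneg[of U f] by (force simp: \<mu>_def)
  have h_le: "0 \<le> expect U (heavy_part P f)" "expect U (heavy_part P f) \<le> \<mu>"
    using f01 unfolding \<mu>_def by (auto intro!: expect_nonneg expect_mono simp: heavy_part_def)
  have "(2/5 * \<mu>) ^ 4 \<le> (expect U (\<lambda>u. (P (heavy_part P f) u)\<^sup>2)) ^ 4"
    using heavy_part_projection_mass[OF assms] \<mu> by (intro power_mono) (simp_all add: \<mu>_def)
  also have "\<dots> \<le> (expect U (heavy_part P f)) ^ 3 * Z"
    unfolding Z_def by (rule orth_projector_indicator_fourth_moment[OF P h01])
  also have "\<dots> \<le> \<mu> ^ 3 * Z"
    using h_le expect_nonneg[of U "\<lambda>u. P (heavy_part P f) u ^ 4"]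
    by (intro mult_right_mono power_mono) (simp_all add: Z_def)
  finally have "\<mu> ^ 3 * (16/625 * \<mu>) \<le> \<mu> ^ 3 * Z"
    by (simp add: power_mult_distrib power_numeral_reduce algebra_simps)
  then show ?thesis
    using \<mu> by (simp add: \<mu>_def Z_def)
qed (simp add: expect_nonneg)

theorem lemma4p11:
  shows "\<exists>c1 c2 :: real. c1 > 0 \<and> c2 > 0 \<and>
    (\<forall>(U :: nat set) (\<epsilon> :: real) (P :: (nat \<Rightarrow> real) \<Rightarrow> (nat \<Rightarrow> real)) (f :: nat \<Rightarrow> real) (\<mu> :: real).
       finite U \<longrightarrow> \<epsilon> < 1 / 400 \<longrightarrow> orth_projector U P \<longrightarrow>
       (\<forall>u\<in>U. f u \<in> {0, 1}) \<longrightarrow>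
       \<mu> = real (card {u\<in>U. f u = 1}) / real (card U) \<longrightarrow> \<mu> > 0 \<longrightarrow>
       (lp_norm U 2 (P f)) ^ 2 \<ge> (1 - \<epsilon>) * \<mu> \<longrightarrow>
       (\<exists>fb :: nat \<Rightarrow> real. (lp_norm U 4 (P fb)) ^ 4 \<ge> c1 * \<mu> \<and>
          (\<forall>u\<in>U. (P f u) ^ 2 \<ge> c2 * \<bar>fb u\<bar>)))"
proof (rule exI[of _ "16/625"], rule exI[of _ "1/4"], intro conjI allI impI)
  fix U :: "nat set" and \<epsilon> \<mu> :: real and P :: "(nat \<Rightarrow> real) \<Rightarrow> nat \<Rightarrow> real" and f :: "nat \<Rightarrow> real"
  assume "finite U" "\<epsilon> < 1/400" "orth_projector U P" "\<forall>u\<in>U. f u \<in> {0, 1}"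
    "\<mu> = real (card {u\<in>U. f u = 1}) / real (card U)" "0 < \<mu>"
    "(1 - \<epsilon>) * \<mu> \<le> lp_norm U 2 (P f) ^ 2"
  then have \<mu>: "\<mu> = expect U f"
    and mass: "(1 - \<epsilon>) * expect U f \<le> expect U (\<lambda>u. (P f u)\<^sup>2)"
    by (simp_all add: expect_indicator lp_norm_2_power)
  show "\<exists>fb. 16/625 * \<mu> \<le> lp_norm U 4 (P fb) ^ 4 \<and> (\<forall>u\<in>U. 1/4 * \<bar>fb u\<bar> \<le> (P f u)\<^sup>2)"
  proof (intro exI[of _ "heavy_part P f"] conjI ballI)
    show "16/625 * \<mu> \<le> lp_norm U 4 (P (heavy_part P f)) ^ 4"
      unfolding \<mu> lp_norm_4_power
      by (rule heavy_part_fourth_moment) (use mass \<open>\<epsilon> < 1/400\<close> \<open>orth_projector U P\<close>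
          \<open>\<forall>u\<in>U. f u \<in> {0, 1}\<close> in auto)
    show "1/4 * \<bar>heavy_part P f u\<bar> \<le> (P f u)\<^sup>2" if "u \<in> U" for u
      using heavy_part_bounded_by_projection[of P f u] by linarith
  qed
qed simp_all

end
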